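(* Consider the relation (B) between $\bar f,g,\bar g$. It defines a birational transformation $\bar g=\bar g(\bar f,g)$ (with inverse $g=g(\bar f,\bar g)$). This transformation [resp. its inverse] is uniquely characterized by the following properties: (i) $\bar g$ [resp. $g$] is given by a ratio of two polynomials in $(\bar f,g)$ [resp. $(\bar f,\bar g)$] of bidegree $(4,1)$, both vanishing at the 8 points $(\bar f,g)=(\bar f(u_i),g(u_i))$ [resp. $(\bar f,\bar g)=(\bar f(u_i),\bar g(u_i))$], $i=1,\dots,8$; (ii) for generic $u$, it maps $(\bar f,g)=(\bar f(\frac{h_1}{qu}),g(\frac{h_1}{qu}))$ to $(\bar f,\bar g)=(\bar f(u),\bar g(u))$ and vice versa.
   Context: Let $h_1,h_2,u_1,\dots,u_8$ be generic nonzero complex parameters and $q=h_1^2h_2^2/(u_1\cdots u_8)$. Put $g(u)=u+h_2/u$, $\bar f(u)=u+\frac{h_1}{qu}$, $\bar g(u)=u+\frac{h_2q}{u}$. Let $U(z)=\prod_{i=1}^8(z-u_i)=\sum_{i=0}^8(-1)^i m_{8-i}z^i$ (so $m_0=1$, $m_8=h_1^2h_2^2/q$). For a parameter $h$ define polynomials in a variable $x$: $P_n(h,x)=m_0x^4-m_1x^3+(m_2-3hm_0-h^{-3}m_8)x^2+(2hm_1-m_3+h^{-2}m_7)x+(h^2m_0-hm_2+m_4-h^{-1}m_6+h^{-2}m_8)$, $P_d(h,x)=m_8x^4-hm_7x^3+(h^2m_6-3hm_8-h^5m_0)x^2+(2h^2m_7-h^3m_5+h^5m_1)x+(h^6m_0-h^5m_2+h^4m_4-h^3m_6+h^2m_8)$.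 Relation (B): $$\frac{(\bar f-\bar g)(\bar f-g)-(\frac{h_1}{q}-h_2q)(\frac{h_1}{q}-h_2)\frac q{h_1}}{(\frac{\bar fq}{h_1}-\frac{\bar g}{h_2q})(\frac{\bar fq}{h_1}-\frac g{h_2})-(\frac q{h_1}-\frac1{h_2q})(\frac q{h_1}-\frac1{h_2})\frac{h_1}q}=\frac{h_1^4h_2^2}{q^3}\frac{P_n(\frac{h_1}q,\bar f)}{P_d(\frac{h_1}q,\bar f)}.$$ *)

theory Defs
  imports Complex_Main
begin

definition nonzero_mpoly :: "nat \<Rightarrow> ((nat \<Rightarrow> nat) \<Rightarrow> complex) \<Rightarrow> bool" where
  "nonzero_mpoly n c \<longleftrightarrow> finite {e. c e \<noteq> 0} \<and> {e. c e \<noteq> 0} \<noteq> {} \<and>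
     (\<forall>e. c e \<noteq> 0 \<longrightarrow> (\<forall>i\<ge>n. e i = 0))"

definition mpoly_val :: "((nat \<Rightarrow> nat) \<Rightarrow> complex) \<Rightarrow> (nat \<Rightarrow> complex) \<Rightarrow> complex" where
  "mpoly_val c x = (\<Sum>e\<in>{e. c e \<noteq> 0}. c e * (\<Prod>i\<in>{i. e i \<noteq> 0}. x i ^ e i))"

definition param_vec :: "complex \<Rightarrow> complex \<Rightarrow> (nat \<Rightarrow> complex) \<Rightarrow> nat \<Rightarrow> complex" where
  "param_vec h1 h2 u = (\<lambda>i. if i = 0 then h1 else if i = 1 then h2 else u (i - 1))"

definition pt2 :: "complex \<Rightarrow> complex \<Rightarrow> nat \<Rightarrow> complex" where
  "pt2 x y = (\<lambda>i. if i = 0 then x else y)"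

definition qpar :: "complex \<Rightarrow> complex \<Rightarrow> (nat \<Rightarrow> complex) \<Rightarrow> complex" where
  "qpar h1 h2 u = h1^2 * h2^2 / (\<Prod>i\<in>{1..8::nat}. u i)"

definition gfun :: "complex \<Rightarrow> complex \<Rightarrow> complex" where
  "gfun h2 w = w + h2 / w"

definition fbar :: "complex \<Rightarrow> complex \<Rightarrow> complex \<Rightarrow> complex" where
  "fbar h1 q w = w + h1 / (q * w)"

definition gbar :: "complex \<Rightarrow> complex \<Rightarrow> complex \<Rightarrow> complex" where
  "gbar h2 q w = w + h2 * q / w"

text \<open>Elementary symmetric functions m_k of u_1..u_8, so that
  prod (z - u_i) = sum_i (-1)^i m_{8-i} z^i.\<close>
definition msym :: "(nat \<Rightarrow> complex) \<Rightarrow> nat \<Rightarrow> complex" where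
  "msym u k = (\<Sum>S\<in>{S. S \<subseteq> {1..8::nat} \<and> card S = k}. \<Prod>i\<in>S. u i)"

definition Pn :: "(nat \<Rightarrow> complex) \<Rightarrow> complex \<Rightarrow> complex \<Rightarrow> complex" where
  "Pn u h x = (let m = msym u in
     m 0 * x^4 - m 1 * x^3 + (m 2 - 3*h*m 0 - m 8 / h^3) * x^2
     + (2*h*m 1 - m 3 + m 7 / h^2) * x
     + (h^2 * m 0 - h * m 2 + m 4 - m 6 / h + m 8 / h^2))"

definition Pd :: "(nat \<Rightarrow> complex) \<Rightarrow> complex \<Rightarrow> complex \<Rightarrow> complex" where
  "Pd u h x = (let m = msym u in
     m 8 * x^4 - h * m 7 * x^3 + (h^2 * m 6 - 3*h*m 8 - h^5 * m 0) * x^2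
     + (2*h^2 * m 7 - h^3 * m 5 + h^5 * m 1) * x
     + (h^6 * m 0 - h^5 * m 2 + h^4 * m 4 - h^3 * m 6 + h^2 * m 8))"

definition relB :: "complex \<Rightarrow> complex \<Rightarrow> (nat \<Rightarrow> complex) \<Rightarrow> complex \<Rightarrow> complex \<Rightarrow> complex \<Rightarrow> bool" where
  "relB h1 h2 u fb g gb \<longleftrightarrow> (let q = qpar h1 h2 u in
     ((fb - gb) * (fb - g) - (h1/q - h2*q) * (h1/q - h2) * (q/h1)) /
     ((fb*q/h1 - gb/(h2*q)) * (fb*q/h1 - g/h2) - (q/h1 - 1/(h2*q)) * (q/h1 - 1/h2) * (h1/q))
     = h1^4 * h2^2 / q^3 * (Pn u (h1/q) fb / Pd u (h1/q) fb))"

definition bd41 :: "(nat \<Rightarrow> nat \<Rightarrow> complex) \<Rightarrow> complex \<Rightarrow> complex \<Rightarrow> complex" where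
  "bd41 a x y = (\<Sum>i\<le>4. \<Sum>j\<le>1. a i j * x^i * y^j)"

definition fwd_props :: "complex \<Rightarrow> complex \<Rightarrow> (nat \<Rightarrow> complex) \<Rightarrow>
    (nat \<Rightarrow> nat \<Rightarrow> complex) \<Rightarrow> (nat \<Rightarrow> nat \<Rightarrow> complex) \<Rightarrow> bool" where
  "fwd_props h1 h2 u N D \<longleftrightarrow> (let q = qpar h1 h2 u in
     (\<forall>i\<in>{1..8}. bd41 N (fbar h1 q (u i)) (gfun h2 (u i)) = 0 \<and>
                 bd41 D (fbar h1 q (u i)) (gfun h2 (u i)) = 0) \<and>
     finite {t. \<not> (bd41 D (fbar h1 q (h1/(q*t))) (gfun h2 (h1/(q*t))) \<noteq> 0 \<and>
                 bd41 N (fbar h1 q (h1/(q*t))) (gfun h2 (h1/(q*t))) /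
                 bd41 D (fbar h1 q (h1/(q*t))) (gfun h2 (h1/(q*t))) = gbar h2 q t)})"

definition inv_props :: "complex \<Rightarrow> complex \<Rightarrow> (nat \<Rightarrow> complex) \<Rightarrow>
    (nat \<Rightarrow> nat \<Rightarrow> complex) \<Rightarrow> (nat \<Rightarrow> nat \<Rightarrow> complex) \<Rightarrow> bool" where
  "inv_props h1 h2 u N D \<longleftrightarrow> (let q = qpar h1 h2 u in
     (\<forall>i\<in>{1..8}. bd41 N (fbar h1 q (u i)) (gbar h2 q (u i)) = 0 \<and>
                 bd41 D (fbar h1 q (u i)) (gbar h2 q (u i)) = 0) \<and>
     finite {t. \<not> (bd41 D (fbar h1 q t) (gbar h2 q t) \<noteq> 0 \<and>
                 bd41 N (fbar h1 q t) (gbar h2 q t) / bd41 D (fbar h1 q t) (gbar h2 q t)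
                   = gfun h2 (h1/(q*t)))})"

end

theory Submission
  imports Defs "HOL-Computational_Algebra.Polynomial"
begin

text \<open>
  With the reduced parameters  a = h1/q,  b = h2 q,  c = h2  the three coordinates
  become  fb = w + a/w,  g = w + c/w,  gb = w + b/w,  and the involution  w \<mapsto> a/w  fixes fb.
  The points (fb(w), g(w)) all lie on one conic in the (fb, g)-plane, and the eight base points
  are its points with parameter w = u_i.

  (1) Uniqueness: if two bidegree-(4,1) fractions N/D and N'/D' both vanish at the eight base
  points and agree with the map (ii) at all but finitely many points of the conic, then the
  cross difference N'D - ND', a quadratic in g with coefficients of degree \<le> 8 in fb, is
  divisible by the conic; the double zeros at the base points then force it to vanish.
  (2) Existence: explicit polynomials  pencil_num, pencil_den  whose restriction to the conic is
  the polynomial  prod_i (w - u_i)  times simple factors; this gives (i) and (ii) at once, and an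
  explicit polynomial identity shows that (B) is equivalent to  gb = N/D  away from a curve.
  The inverse map is the same construction with b and c exchanged.
  (3) Genericity: an explicit nonzero polynomial in (h1, h2, u_1..u_8) whose nonvanishing
  guarantees all the non-degeneracy conditions used in (1) and (2).
\<close>

section \<open>Polynomial functions on C^n\<close>

definition fin_mpoly :: "nat \<Rightarrow> ((nat \<Rightarrow> nat) \<Rightarrow> complex) \<Rightarrow> bool" where
  "fin_mpoly n c \<longleftrightarrow> finite {e. c e \<noteq> 0} \<and> (\<forall>e. c e \<noteq> 0 \<longrightarrow> (\<forall>i\<ge>n. e i = 0))"

definition polyfun :: "nat \<Rightarrow> ((nat \<Rightarrow> complex) \<Rightarrow> complex) \<Rightarrow> bool" where
  "polyfun n f \<longleftrightarrow> (\<exists>c. fin_mpoly n c \<and> (\<forall>x. mpoly_val c x = f x))"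

definition mon :: "(nat \<Rightarrow> nat) \<Rightarrow> (nat \<Rightarrow> complex) \<Rightarrow> complex" where
  "mon e x = (\<Prod>i\<in>{i. e i \<noteq> 0}. x i ^ e i)"

lemma mpoly_val_mon: "mpoly_val c x = (\<Sum>e\<in>{e. c e \<noteq> 0}. c e * mon e x)"
  unfolding mpoly_val_def mon_def by simp

lemma mpoly_val_superset:
  assumes "finite A" "{e. c e \<noteq> 0} \<subseteq> A"
  shows "mpoly_val c x = (\<Sum>e\<in>A. c e * mon e x)"
  unfolding mpoly_val_mon
  by (rule sum.mono_neutral_left) (use assms in auto)

lemma mon_eq:
  assumes "\<forall>i\<ge>n. e i = 0"
  shows "mon e x = (\<Prod>i<n. x i ^ e i)"
  unfolding mon_def
proof (rule prod.mono_neutral_left)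
  show "{i. e i \<noteq> 0} \<subseteq> {..<n}"
    using assms by (metis (mono_tags) lessThan_iff mem_Collect_eq not_less subsetI)
qed auto

lemma mon_add:
  assumes e: "\<forall>i\<ge>n. e i = 0" and f: "\<forall>i\<ge>n. f i = 0"
  shows "mon (\<lambda>i. e i + f i) x = mon e x * mon f x"
proof -
  have ef: "\<forall>i\<ge>n. e i + f i = 0" using e f by simp
  show ?thesis
    unfolding mon_eq[OF e] mon_eq[OF f] mon_eq[OF ef] by (simp add: power_add prod.distrib)
qed

lemma polyfun_const: "polyfun n (\<lambda>x. k)"
proof -
  define c where "c = (\<lambda>e::nat\<Rightarrow>nat. if e = (\<lambda>_. 0) then k else 0)"
  have "fin_mpoly n c" unfolding fin_mpoly_def c_def
    by (auto intro: finite_subset[of _ "{\<lambda>_. 0}"])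
  moreover have "mpoly_val c x = k" for x
    by (subst mpoly_val_superset[of "{\<lambda>_. 0}"]) (auto simp: c_def mon_def)
  ultimately show ?thesis unfolding polyfun_def by blast
qed

lemma polyfun_var: assumes "i < n" shows "polyfun n (\<lambda>x. x i)"
proof -
  define ei where "ei = (\<lambda>j::nat. if j = i then 1 else (0::nat))"
  define c where "c = (\<lambda>e::nat\<Rightarrow>nat. if e = ei then 1 else (0::complex))"
  have "fin_mpoly n c" unfolding fin_mpoly_def c_def using assms
    by (auto intro: finite_subset[of _ "{ei}"] simp: ei_def)
  moreover have "mpoly_val c x = x i" for x
  proof -
    have "{j. ei j \<noteq> 0} = {i}" by (auto simp: ei_def)
    then show ?thesis
      by (subst mpoly_val_superset[of "{ei}"]) (auto simp: c_def mon_def ei_def)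
  qed
  ultimately show ?thesis unfolding polyfun_def by blast
qed

lemma polyfun_add:
  assumes "polyfun n f" "polyfun n g" shows "polyfun n (\<lambda>x. f x + g x)"
proof -
  obtain c where c: "fin_mpoly n c" "\<forall>x. mpoly_val c x = f x"
    using assms(1) unfolding polyfun_def by blast
  obtain d where d: "fin_mpoly n d" "\<forall>x. mpoly_val d x = g x"
    using assms(2) unfolding polyfun_def by blast
  define s where "s = (\<lambda>e. c e + d e)"
  let ?A = "{e. c e \<noteq> 0} \<union> {e. d e \<noteq> 0}"
  have fA: "finite ?A" using c d by (auto simp: fin_mpoly_def)
  have sub: "{e. s e \<noteq> 0} \<subseteq> ?A" by (auto simp: s_def)
  have "fin_mpoly n s" using c d fA sub unfolding fin_mpoly_def s_def
    by (auto intro: finite_subset)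
  moreover have "mpoly_val s x = f x + g x" for x
  proof -
    have "mpoly_val s x = (\<Sum>e\<in>?A. s e * mon e x)" by (rule mpoly_val_superset[OF fA sub])
    also have "\<dots> = (\<Sum>e\<in>?A. c e * mon e x) + (\<Sum>e\<in>?A. d e * mon e x)"
      by (simp add: s_def distrib_right sum.distrib)
    also have "(\<Sum>e\<in>?A. c e * mon e x) = mpoly_val c x"
      by (rule mpoly_val_superset[symmetric]) (use fA in auto)
    also have "(\<Sum>e\<in>?A. d e * mon e x) = mpoly_val d x"
      by (rule mpoly_val_superset[symmetric]) (use fA in auto)
    finally show ?thesis using c d by simp
  qed
  ultimately show ?thesis unfolding polyfun_def by blast
qed

text \<open>The product of two coefficient functions is their convolution over pairs of exponents.\<close>
lemma polyfun_mult:
  assumes "polyfun n f" "polyfun n g" shows "polyfun n (\<lambda>x. f x * g x)"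
proof -
  obtain c where c: "fin_mpoly n c" "\<forall>x. mpoly_val c x = f x"
    using assms(1) unfolding polyfun_def by blast
  obtain d where d: "fin_mpoly n d" "\<forall>x. mpoly_val d x = g x"
    using assms(2) unfolding polyfun_def by blast
  define Sc where "Sc = {e. c e \<noteq> 0}"
  define Sd where "Sd = {e. d e \<noteq> 0}"
  have fSc: "finite Sc" and fSd: "finite Sd" using c d by (auto simp: fin_mpoly_def Sc_def Sd_def)
  have vars: "\<forall>i\<ge>n. fst p i = 0" "\<forall>i\<ge>n. snd p i = 0" if "p \<in> Sc \<times> Sd" for p
    using that c d unfolding fin_mpoly_def Sc_def Sd_def by auto
  define ad where "ad = (\<lambda>(p::(nat\<Rightarrow>nat)\<times>(nat\<Rightarrow>nat)). (\<lambda>i. fst p i + snd p i))"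
  define s where "s = (\<lambda>e. \<Sum>p\<in>{p\<in>Sc\<times>Sd. ad p = e}. c (fst p) * d (snd p))"
  let ?A = "ad ` (Sc \<times> Sd)"
  have fA: "finite ?A" using fSc fSd by auto
  have sub: "{e. s e \<noteq> 0} \<subseteq> ?A"
  proof
    fix e assume "e \<in> {e. s e \<noteq> 0}"
    then have "s e \<noteq> 0" by simp
    then have "{p\<in>Sc\<times>Sd. ad p = e} \<noteq> {}" unfolding s_def by (metis sum.empty)
    then show "e \<in> ?A" by blast
  qed
  have "fin_mpoly n s" unfolding fin_mpoly_def
    using fA sub vars by (auto intro: finite_subset simp: ad_def)
  moreover have "mpoly_val s x = f x * g x" for x
  proof -
    have "mpoly_val s x = (\<Sum>e\<in>?A. s e * mon e x)" by (rule mpoly_val_superset[OF fA sub])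
    also have "\<dots> = (\<Sum>e\<in>?A. \<Sum>p\<in>{p\<in>Sc\<times>Sd. ad p = e}. c (fst p) * d (snd p) * mon (ad p) x)"
      unfolding s_def sum_distrib_right by (rule sum.cong) auto
    also have "\<dots> = (\<Sum>p\<in>Sc\<times>Sd. c (fst p) * d (snd p) * mon (ad p) x)"
      by (rule sum.group) (use fSc fSd in auto)
    also have "\<dots> = (\<Sum>p\<in>Sc\<times>Sd. (c (fst p) * mon (fst p) x) * (d (snd p) * mon (snd p) x))"
      by (rule sum.cong) (auto simp: ad_def mon_add[OF vars] mult_ac split: prod.splits)
    also have "\<dots> = (\<Sum>e\<in>Sc. c e * mon e x) * (\<Sum>e\<in>Sd. d e * mon e x)"
      by (simp add: sum_product sum.cartesian_product split_beta)
    also have "\<dots> = f x * g x" using c d by (simp add: mpoly_val_mon Sc_def Sd_def)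
    finally show ?thesis .
  qed
  ultimately show ?thesis unfolding polyfun_def by blast
qed

lemma polyfun_uminus: "polyfun n f \<Longrightarrow> polyfun n (\<lambda>x. - f x)"
  using polyfun_mult[OF polyfun_const[of n "-1"]] by simp

lemma polyfun_diff: "polyfun n f \<Longrightarrow> polyfun n g \<Longrightarrow> polyfun n (\<lambda>x. f x - g x)"
  using polyfun_add[of n f "\<lambda>x. - g x"] polyfun_uminus[of n g] by simp

lemma polyfun_power: "polyfun n f \<Longrightarrow> polyfun n (\<lambda>x. f x ^ k)"
  by (induction k) (auto intro: polyfun_const polyfun_mult)

lemma polyfun_sum:
  "finite S \<Longrightarrow> (\<And>i. i \<in> S \<Longrightarrow> polyfun n (f i)) \<Longrightarrow> polyfun n (\<lambda>x. \<Sum>i\<in>S. f i x)"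
  by (induction S rule: finite_induct) (auto intro: polyfun_const polyfun_add)

lemma polyfun_prod:
  "finite S \<Longrightarrow> (\<And>i. i \<in> S \<Longrightarrow> polyfun n (f i)) \<Longrightarrow> polyfun n (\<lambda>x. \<Prod>i\<in>S. f i x)"
  by (induction S rule: finite_induct) (auto intro: polyfun_const polyfun_mult)

lemma polyfun_nonzero:
  assumes "polyfun n f" "f x0 \<noteq> 0"
  shows "\<exists>Q. nonzero_mpoly n Q \<and> (\<forall>x. mpoly_val Q x = f x)"
proof -
  obtain c where c: "fin_mpoly n c" "\<forall>x. mpoly_val c x = f x"
    using assms(1) unfolding polyfun_def by blast
  have "{e. c e \<noteq> 0} \<noteq> {}"
  proof
    assume "{e. c e \<noteq> 0} = {}"
    then have "mpoly_val c x0 = 0" unfolding mpoly_val_def by simp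
    then show False using c assms(2) by simp
  qed
  then show ?thesis using c unfolding nonzero_mpoly_def fin_mpoly_def by blast
qed

section \<open>Bidegree-(4,1) polynomials as pairs of univariate polynomials\<close>

definition pc :: "(nat \<Rightarrow> nat \<Rightarrow> complex) \<Rightarrow> nat \<Rightarrow> complex poly" where
  "pc A j = (\<Sum>i\<le>4. monom (A i j) i)"

lemma poly_pc: "poly (pc A j) x = (\<Sum>i\<le>4. A i j * x^i)"
  unfolding pc_def by (simp add: poly_sum poly_monom)

lemma degree_pc: "degree (pc A j) \<le> 4"
  unfolding pc_def by (rule degree_sum_le) (auto intro: order_trans[OF degree_monom_le])

lemma coeff_pc: "coeff (pc A j) k = (if k \<le> 4 then A k j else 0)"
  unfolding pc_def coeff_sum by simp

lemma bd41_pc: "bd41 A x y = poly (pc A 0) x + poly (pc A 1) x * y"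
  unfolding bd41_def poly_pc
  by (simp add: sum.swap[of _ "{..1::nat}"] sum_distrib_right numeral_2_eq_2 atMost_Suc mult_ac)
     (simp add: sum.distrib sum_distrib_left mult_ac)

lemma bd41_expand: "bd41 A x y = A 0 0 + A 1 0 * x + A 2 0 * x^2 + A 3 0 * x^3 + A 4 0 * x^4
   + (A 0 1 + A 1 1 * x + A 2 1 * x^2 + A 3 1 * x^3 + A 4 1 * x^4) * y"
  unfolding bd41_pc poly_pc by (simp add: numeral_eq_Suc atMost_Suc algebra_simps)

text \<open>The cross difference N'D - ND' of two fractions is quadratic in y; these are its
  coefficients, polynomials of degree at most 8 in x.\<close>
definition cross0 :: "(nat \<Rightarrow> nat \<Rightarrow> complex) \<Rightarrow> (nat \<Rightarrow> nat \<Rightarrow> complex) \<Rightarrow>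
    (nat \<Rightarrow> nat \<Rightarrow> complex) \<Rightarrow> (nat \<Rightarrow> nat \<Rightarrow> complex) \<Rightarrow> complex poly" where
  "cross0 N D N' D' = pc N' 0 * pc D 0 - pc N 0 * pc D' 0"

definition cross1 :: "(nat \<Rightarrow> nat \<Rightarrow> complex) \<Rightarrow> (nat \<Rightarrow> nat \<Rightarrow> complex) \<Rightarrow>
    (nat \<Rightarrow> nat \<Rightarrow> complex) \<Rightarrow> (nat \<Rightarrow> nat \<Rightarrow> complex) \<Rightarrow> complex poly" where
  "cross1 N D N' D' = pc N' 0 * pc D 1 + pc N' 1 * pc D 0 - pc N 0 * pc D' 1 - pc N 1 * pc D' 0"

definition cross2 :: "(nat \<Rightarrow> nat \<Rightarrow> complex) \<Rightarrow> (nat \<Rightarrow> nat \<Rightarrow> complex) \<Rightarrow>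
    (nat \<Rightarrow> nat \<Rightarrow> complex) \<Rightarrow> (nat \<Rightarrow> nat \<Rightarrow> complex) \<Rightarrow> complex poly" where
  "cross2 N D N' D' = pc N' 1 * pc D 1 - pc N 1 * pc D' 1"

lemma bd41_cross:
  "bd41 N' x y * bd41 D x y - bd41 N x y * bd41 D' x y =
   poly (cross0 N D N' D') x + poly (cross1 N D N' D') x * y + poly (cross2 N D N' D') x * y^2"
  unfolding bd41_pc cross0_def cross1_def cross2_def by (simp add: algebra_simps power2_eq_square)

lemma degree_cross0: "degree (cross0 N D N' D') \<le> 8"
proof -
  have "degree (pc N' 0 * pc D 0) \<le> 8" "degree (pc N 0 * pc D' 0) \<le> 8"
    using degree_mult_le[of "pc N' 0" "pc D 0"] degree_mult_le[of "pc N 0" "pc D' 0"]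
      degree_pc[of N' 0] degree_pc[of D 0] degree_pc[of N 0] degree_pc[of D' 0] by linarith+
  then show ?thesis unfolding cross0_def using degree_diff_le by blast
qed

lemma bd41_cross_double_root:
  assumes "bd41 N x y0 = 0" "bd41 D x y0 = 0" "bd41 N' x y0 = 0" "bd41 D' x y0 = 0"
  shows "poly (cross0 N D N' D') x + poly (cross1 N D N' D') x * y + poly (cross2 N D N' D') x * y^2
       = poly (cross2 N D N' D') x * (y - y0)^2"
proof -
  have "poly (pc A 0) x = - (poly (pc A 1) x * y0)" if "bd41 A x y0 = 0" for A
    using that unfolding bd41_pc by (simp add: eq_neg_iff_add_eq_0)
  then show ?thesis using assms unfolding cross0_def cross1_def cross2_def
    by (simp add: algebra_simps power2_eq_square)
qed

section \<open>The conic swept out by (w + a/w, w + c/w)\<close>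

lemma finite_sq_eq: "finite {s::complex. s^2 = v}"
proof -
  have "{s::complex. s^2 = v} \<subseteq> {s. poly [:-v, 0, 1:] s = 0}" by (auto simp: power2_eq_square)
  moreover have "finite {s. poly [:-v, 0, 1:] s = 0}" by (rule poly_roots_finite) simp
  ultimately show ?thesis by (rule finite_subset)
qed

lemma finite_curve_fibre: "finite {s::complex. s \<noteq> 0 \<and> s + a/s = v}"
proof -
  have "{s::complex. s \<noteq> 0 \<and> s + a/s = v} \<subseteq> {s. poly [:a, -v, 1:] s = 0}"
  proof
    fix s assume "s \<in> {s::complex. s \<noteq> 0 \<and> s + a/s = v}"
    then have "s * s + a = v * s" by (auto simp: field_simps)
    then show "s \<in> {s. poly [:a, -v, 1:] s = 0}" by (simp add: algebra_simps)
  qed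
  moreover have "finite {s. poly [:a, -v, 1:] s = 0}" by (rule poly_roots_finite) simp
  ultimately show ?thesis by (rule finite_subset)
qed

lemma infinite_curve_projection:
  fixes S :: "complex set"
  assumes "finite (- S)"
  shows "infinite ((\<lambda>s. s + a/s) ` (S - {0}))"
proof
  assume fin: "finite ((\<lambda>s. s + a/s) ` (S - {0}))"
  have "S - {0} \<subseteq> (\<Union>v\<in>(\<lambda>s. s + a/s) ` (S - {0}). {s. s \<noteq> 0 \<and> s + a/s = v})" by auto
  moreover have "finite (\<Union>v\<in>(\<lambda>s. s + a/s) ` (S - {0}). {s::complex. s \<noteq> 0 \<and> s + a/s = v})"
    using fin finite_curve_fibre by blast
  ultimately have "finite (S - {0})" by (rule finite_subset)
  then have "finite (S \<union> - S)" using assms by (metis finite_Un finite_insert insert_Diff_single)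
  then show False by (simp add: infinite_UNIV_char_0)
qed

definition conic :: "complex \<Rightarrow> complex \<Rightarrow> complex \<Rightarrow> complex \<Rightarrow> complex" where
  "conic a c x y = a * y^2 - (a + c) * x * y + (a - c)^2 + c * x^2"

lemma conic_on_curve: "s \<noteq> 0 \<Longrightarrow> conic a c (s + a/s) (s + c/s) = 0"
  unfolding conic_def by (simp add: field_simps power2_eq_square)

text \<open>The parameters s and a/s give the same x and the two points of the conic over it;
  they are distinct unless s^2 = a.\<close>
lemma curve_fibre_distinct:
  fixes a c s :: complex
  assumes "a \<noteq> 0" "a \<noteq> c" "s \<noteq> 0" "s^2 \<noteq> a"
  shows "s + c/s \<noteq> a/s + c*s/a"
proof -
  have "(s + c/s) - (a/s + c*s/a) = (s^2 - a) * (a - c) / (a * s)"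
    using assms by (simp add: field_simps power2_eq_square)
  then show ?thesis using assms by auto
qed

lemma quadratic_two_roots:
  fixes f0 f1 f2 y1 y2 :: "'a::field"
  assumes "y1 \<noteq> y2" "f0 + f1 * y1 + f2 * y1^2 = 0" "f0 + f1 * y2 + f2 * y2^2 = 0"
  shows "f1 = - (f2 * (y1 + y2))" and "f0 = f2 * y1 * y2"
proof -
  have "(y1 - y2) * (f1 + f2 * (y1 + y2)) = (f0 + f1 * y1 + f2 * y1^2) - (f0 + f1 * y2 + f2 * y2^2)"
    by (simp add: algebra_simps power2_eq_square)
  then have "f1 + f2 * (y1 + y2) = 0" using assms by simp
  then show f1: "f1 = - (f2 * (y1 + y2))" by (simp add: eq_neg_iff_add_eq_0)
  show "f0 = f2 * y1 * y2" using assms(2) unfolding f1 by (simp add: algebra_simps power2_eq_square)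
qed

text \<open>A quadratic in y vanishing at both points of the conic over x is a multiple of the conic.\<close>
lemma curve_fibre_relations:
  fixes a c s f0 f1 f2 :: complex
  defines "x \<equiv> s + a/s"
  assumes a0: "a \<noteq> 0" and ac: "a \<noteq> c" and s0: "s \<noteq> 0" and sa: "s^2 \<noteq> a"
    and z1: "f0 + f1 * (s + c/s) + f2 * (s + c/s)^2 = 0"
    and z2: "f0 + f1 * (a/s + c*s/a) + f2 * (a/s + c*s/a)^2 = 0"
  shows "a * f0 = f2 * ((a - c)^2 + c * x^2)" and "a * f1 = - (f2 * ((a + c) * x))"
proof -
  note v = quadratic_two_roots[OF curve_fibre_distinct[OF a0 ac s0 sa] z1 z2]
  have "a * ((s + c/s) * (a/s + c*s/a)) = (a - c)^2 + c * x^2"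
    unfolding x_def using a0 s0 by (simp add: field_simps power2_eq_square)
  then show "a * f0 = f2 * ((a - c)^2 + c * x^2)" unfolding v(2) by (metis mult.assoc mult.left_commute)
  have "a * ((s + c/s) + (a/s + c*s/a)) = (a + c) * x"
    unfolding x_def using a0 s0 by (simp add: field_simps)
  then show "a * f1 = - (f2 * ((a + c) * x))" unfolding v(1) by (metis mult.left_commute mult_minus_right)
qed

lemma poly_eq_on_infinite:
  fixes p r :: "complex poly"
  assumes "infinite A" "\<And>x. x \<in> A \<Longrightarrow> poly p x = poly r x"
  shows "p = r"
proof (rule ccontr)
  assume "p \<noteq> r"
  then have "finite {x. poly (p - r) x = 0}" by (intro poly_roots_finite) simp
  moreover have "A \<subseteq> {x. poly (p - r) x = 0}" using assms(2) by auto
  ultimately show False using assms(1) finite_subset by blast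
qed

lemma conic_divides:
  fixes F0 F1 F2 :: "complex poly"
  assumes a0: "a \<noteq> 0" and ac: "a \<noteq> c"
    and cof: "finite {s. poly F0 (s + a/s) + poly F1 (s + a/s) * (s + c/s)
                         + poly F2 (s + a/s) * (s + c/s)^2 \<noteq> 0}"
  shows "smult a F0 = F2 * [:(a - c)^2, 0, c:]" and "smult a F1 = - (F2 * [:0, a + c:])"
proof -
  define G where "G = {s. poly F0 (s + a/s) + poly F1 (s + a/s) * (s + c/s)
                         + poly F2 (s + a/s) * (s + c/s)^2 = 0}"
  define S where "S = {s. s \<in> G \<and> a/s \<in> G \<and> s^2 \<noteq> a}"
  have "- S \<subseteq> - G \<union> (\<lambda>t. a/t) ` (- G) \<union> {s. s^2 = a}"
  proof
    fix s assume "s \<in> - S"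
    then consider "s \<notin> G" | "a/s \<notin> G" | "s^2 = a" unfolding S_def by auto
    then show "s \<in> - G \<union> (\<lambda>t. a/t) ` (- G) \<union> {s. s^2 = a}"
    proof cases
      case 2
      have "s = a/(a/s)" using a0 by (cases "s = 0") auto
      then show ?thesis using 2 by blast
    qed auto
  qed
  moreover have "finite (- G)" using cof unfolding G_def by (simp add: Compl_eq)
  then have "finite (- G \<union> (\<lambda>t. a/t) ` (- G) \<union> {s. s^2 = a})" using finite_sq_eq by simp
  ultimately have finS: "finite (- S)" by (rule finite_subset)
  have rel: "a * poly F0 (s + a/s) = poly F2 (s + a/s) * ((a - c)^2 + c * (s + a/s)^2) \<and>
             a * poly F1 (s + a/s) = - (poly F2 (s + a/s) * ((a + c) * (s + a/s)))"
    if "s \<in> S - {0}" for s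
  proof -
    have s0: "s \<noteq> 0" and sa: "s^2 \<noteq> a" and sG: "s \<in> G" and asG: "a/s \<in> G"
      using that unfolding S_def by auto
    have "a/(a/s) = s" using a0 s0 by simp
    then have "poly F0 (s + a/s) + poly F1 (s + a/s) * (a/s + c*s/a)
               + poly F2 (s + a/s) * (a/s + c*s/a)^2 = 0" using asG unfolding G_def by (simp add: add.commute)
    moreover have "poly F0 (s + a/s) + poly F1 (s + a/s) * (s + c/s)
               + poly F2 (s + a/s) * (s + c/s)^2 = 0" using sG unfolding G_def by simp
    ultimately show ?thesis using curve_fibre_relations[OF a0 ac s0 sa] by simp
  qed
  have inf: "infinite ((\<lambda>s. s + a/s) ` (S - {0}))" by (rule infinite_curve_projection[OF finS])
  show "smult a F0 = F2 * [:(a - c)^2, 0, c:]"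
  proof (rule poly_eq_on_infinite[OF inf])
    fix x assume "x \<in> (\<lambda>s. s + a/s) ` (S - {0})"
    then obtain s where "s \<in> S - {0}" "x = s + a/s" by blast
    then have "a * poly F0 x = poly F2 x * ((a - c)^2 + c * x^2)" using rel by simp
    then show "poly (smult a F0) x = poly (F2 * [:(a - c)^2, 0, c:]) x"
      by (simp add: algebra_simps power2_eq_square)
  qed
  show "smult a F1 = - (F2 * [:0, a + c:])"
  proof (rule poly_eq_on_infinite[OF inf])
    fix x assume "x \<in> (\<lambda>s. s + a/s) ` (S - {0})"
    then obtain s where "s \<in> S - {0}" "x = s + a/s" by blast
    then have "a * poly F1 x = - (poly F2 x * ((a + c) * x))" using rel by simp
    then show "poly (smult a F1) x = poly (- (F2 * [:0, a + c:])) x" by (simp add: mult_ac)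
  qed
qed

text \<open>Divisibility by the conic gives F0, F1 in terms of F2; evaluating at the
  second point of the conic over a base point shows F2 vanishes there, which is too many
  zeros for its degree \<le> 6.\<close>
lemma quadratic_pencil_vanishes:
  fixes F0 F1 F2 :: "complex poly" and W :: "complex set"
  assumes a0: "a \<noteq> 0" and c0: "c \<noteq> 0" and ac: "a \<noteq> c" and deg: "degree F0 \<le> 8"
    and cof: "finite {s. poly F0 (s + a/s) + poly F1 (s + a/s) * (s + c/s)
                         + poly F2 (s + a/s) * (s + c/s)^2 \<noteq> 0}"
    and W0: "0 \<notin> W" and cW: "card W \<ge> 7" and Wa: "\<forall>w\<in>W. \<forall>w'\<in>W. w * w' \<noteq> a"
    and dbl: "\<And>w y. w \<in> W \<Longrightarrow> poly F0 (w + a/w) + poly F1 (w + a/w) * y + poly F2 (w + a/w) * y^2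
                              = poly F2 (w + a/w) * (y - (w + c/w))^2"
  shows "F0 = 0" and "F1 = 0" and "F2 = 0"
proof -
  note R0 = conic_divides(1)[OF a0 ac cof] and R1 = conic_divides(2)[OF a0 ac cof]
  have rel: "a * (poly F0 x + poly F1 x * y + poly F2 x * y^2) = poly F2 x * conic a c x y" for x y
  proof -
    have h0: "a * poly F0 x = poly F2 x * ((a - c)^2 + c * x^2)"
      using arg_cong[OF R0, of "\<lambda>p. poly p x"] by (simp add: algebra_simps power2_eq_square)
    have h1: "a * poly F1 x = - (poly F2 x * ((a + c) * x))"
      using arg_cong[OF R1, of "\<lambda>p. poly p x"] by (simp add: algebra_simps)
    have "a * (poly F0 x + poly F1 x * y + poly F2 x * y^2)
        = a * poly F0 x + (a * poly F1 x) * y + a * poly F2 x * y^2" by (simp add: algebra_simps)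
    also have "\<dots> = poly F2 x * ((a - c)^2 + c * x^2) - poly F2 x * ((a + c) * x) * y
        + a * poly F2 x * y^2" unfolding h0 h1 by simp
    also have "\<dots> = poly F2 x * conic a c x y" unfolding conic_def by (simp add: algebra_simps)
    finally show ?thesis .
  qed
  have root: "poly F2 (w + a/w) = 0" if w: "w \<in> W" for w
  proof -
    have w0: "w \<noteq> 0" using W0 w by auto
    have wa: "w^2 \<noteq> a" using Wa w by (auto simp: power2_eq_square)
    define y2 where "y2 = a/w + c*w/a"
    have "conic a c (w + a/w) y2 = 0"
      using conic_on_curve[of "a/w" a c] a0 w0 unfolding y2_def by (simp add: add.commute)
    have "a * (poly F2 (w + a/w) * (y2 - (w + c/w))^2)
        = a * (poly F0 (w + a/w) + poly F1 (w + a/w) * y2 + poly F2 (w + a/w) * y2^2)"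
      using dbl[OF w, of y2] by simp
    also have "\<dots> = 0" unfolding rel by (simp add: \<open>conic a c (w + a/w) y2 = 0\<close>)
    finally have "a * (poly F2 (w + a/w) * (y2 - (w + c/w))^2) = 0" .
    moreover have "y2 - (w + c/w) \<noteq> 0"
      using curve_fibre_distinct[OF a0 ac w0 wa] unfolding y2_def by simp
    ultimately show ?thesis using a0 by simp
  qed
  have "F2 = 0"
  proof (rule ccontr)
    assume F2: "F2 \<noteq> 0"
    have "degree F2 + 2 = degree (smult a F0)"
      using R0 degree_mult_eq[OF F2, of "[:(a - c)^2, 0, c:]"] c0 by simp
    then have dF2: "degree F2 \<le> 6" using deg a0 by simp
    have "inj_on (\<lambda>w. w + a/w) W"
    proof (rule inj_onI)
      fix w1 w2 assume w: "w1 \<in> W" "w2 \<in> W" and e: "w1 + a/w1 = w2 + a/w2"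
      have "w1 \<noteq> 0" "w2 \<noteq> 0" using W0 w by auto
      then have "(w1 - w2) * (w1 * w2 - a) = 0" using e by (simp add: field_simps)
      then show "w1 = w2" using Wa w by auto
    qed
    then have "card ((\<lambda>w. w + a/w) ` W) \<ge> 7" using cW by (simp add: card_image)
    then have "F2 = 0"
      by (intro poly_eqI_degree[of "(\<lambda>w. w + a/w) ` W" F2 0]) (use root dF2 in auto)
    then show False using F2 by simp
  qed
  then show "F0 = 0" "F1 = 0" "F2 = 0" using R0 R1 a0 by simp_all
qed

text \<open>The conditions (i) and (ii) in reduced parameters: N and D vanish at the base points
  (w + a/w, w + c/w), w \<in> W, and, except for finitely many parameters s, N/D maps the point
  (s + a/s, s + c/s) of the conic to the value a/s + b s/a (that is, w + b/w at w = a/s).\<close>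
definition curve_pencil :: "complex \<Rightarrow> complex \<Rightarrow> complex \<Rightarrow> complex set \<Rightarrow>
    (nat \<Rightarrow> nat \<Rightarrow> complex) \<Rightarrow> (nat \<Rightarrow> nat \<Rightarrow> complex) \<Rightarrow> bool" where
  "curve_pencil a b c W N D \<longleftrightarrow>
     (\<forall>w\<in>W. bd41 N (w + a/w) (w + c/w) = 0 \<and> bd41 D (w + a/w) (w + c/w) = 0) \<and>
     finite {s. \<not> (bd41 D (s + a/s) (s + c/s) \<noteq> 0 \<and>
                   bd41 N (s + a/s) (s + c/s) / bd41 D (s + a/s) (s + c/s) = a/s + b*s/a)}"

lemma curve_pencil_unique:
  assumes a0: "a \<noteq> 0" and c0: "c \<noteq> 0" and ac: "a \<noteq> c"
    and W0: "0 \<notin> W" and cW: "card W \<ge> 7" and Wa: "\<forall>w\<in>W. \<forall>w'\<in>W. w * w' \<noteq> a"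
    and P: "curve_pencil a b c W N D" and P': "curve_pencil a b c W N' D'"
  shows "bd41 N' x y * bd41 D x y = bd41 N x y * bd41 D' x y"
proof -
  define Exc where "Exc = (\<lambda>N D. {s. \<not> (bd41 D (s + a/s) (s + c/s) \<noteq> 0 \<and>
           bd41 N (s + a/s) (s + c/s) / bd41 D (s + a/s) (s + c/s) = a/s + b*s/a)})"
  have "{s. bd41 N' (s + a/s) (s + c/s) * bd41 D (s + a/s) (s + c/s)
            - bd41 N (s + a/s) (s + c/s) * bd41 D' (s + a/s) (s + c/s) \<noteq> 0} \<subseteq> Exc N D \<union> Exc N' D'"
    unfolding Exc_def by (auto simp: field_simps)
  moreover have "finite (Exc N D \<union> Exc N' D')" using P P' unfolding curve_pencil_def Exc_def by simp
  ultimately have cof: "finite {s. poly (cross0 N D N' D') (s + a/s)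
      + poly (cross1 N D N' D') (s + a/s) * (s + c/s) + poly (cross2 N D N' D') (s + a/s) * (s + c/s)^2 \<noteq> 0}"
    unfolding bd41_cross by (rule finite_subset)
  have dbl: "poly (cross0 N D N' D') (w + a/w) + poly (cross1 N D N' D') (w + a/w) * y
      + poly (cross2 N D N' D') (w + a/w) * y^2 = poly (cross2 N D N' D') (w + a/w) * (y - (w + c/w))^2"
    if "w \<in> W" for w y
    using P P' that unfolding curve_pencil_def by (intro bd41_cross_double_root) auto
  note Z = quadratic_pencil_vanishes[OF a0 c0 ac degree_cross0 cof W0 cW Wa dbl]
  have "bd41 N' x y * bd41 D x y - bd41 N x y * bd41 D' x y = 0" using Z by (simp add: bd41_cross)
  then show ?thesis by simp
qed

section \<open>The explicit pencils\<close>

text \<open>Monic polynomial of degree 8 with constant term a^2 b c and coefficients m_k; for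
  m = msym u and a^2 b c = u_1 \<cdots> u_8 it is prod_i (z - u_i).\<close>
definition base_poly :: "complex \<Rightarrow> complex \<Rightarrow> complex \<Rightarrow> (nat \<Rightarrow> complex) \<Rightarrow> complex \<Rightarrow> complex" where
  "base_poly a b c m s = s^8 - m 1 * s^7 + m 2 * s^6 - m 3 * s^5 + m 4 * s^4 - m 5 * s^3
     + m 6 * s^2 - m 7 * s + a^2*b*c"

lemma base_poly_swap: "base_poly a c b m = base_poly a b c m"
  unfolding base_poly_def by (simp add: mult_ac fun_eq_iff)

text \<open>Coefficients of the numerator and denominator of the forward map; the inverse map uses
  the same formulas with b and c exchanged.\<close>
definition pencil_num :: "complex \<Rightarrow> complex \<Rightarrow> complex \<Rightarrow> (nat \<Rightarrow> complex) \<Rightarrow> nat \<Rightarrow> nat \<Rightarrow> complex" where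
  "pencil_num a b c m i j = (if j = 0 then (if i = 0 then - (a^5 * m 1) + a^4 * b * m 1 + a^4 * c * m 1 + a^4 * m 3 - a^3 * b * c * m 1 - a^3 * b * m 3 - a^3 * c * m 3 - a^3 * m 5 + a^2 * b * c * m 3 + a^2 * b * m 5 + a^2 * c * m 5 + a^2 * m 7 - a * b * c * m 5 - a * b * m 7 - a * c * m 7 + b * c * m 7 else if i = 1 then a^5 - 2 * a^4 * b - 2 * a^4 * c + a^3 * b * m 2 + a^3 * c * m 2 - a^3 * m 4 + 2 * a^2 * b^2 * c + 2 * a^2 * b * c^2 - 2 * a^2 * b * c * m 2 + 2 * a^2 * m 6 - a * b^2 * c^2 + a * b * c * m 4 - a * b * m 6 - a * c * m 6 else if i = 2 then - (a^3 * b * m 1) - a^3 * c * m 1 + 3 * a^2 * b * c * m 1 + a^2 * m 5 - a * b * c * m 3 - 3 * a * m 7 + b * m 7 + c * m 7 else if i = 3 then a^3 * b + a^3 * c - a * b^2 * c - a * b * c^2 + a * b * c * m 2 - a * m 6 else if i = 4 then - (a * b * c * m 1) + m 7 else 0)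
    else (if j = 1 then (if i = 0 then a^5 - a^4 * b - a^4 * m 2 + a^3 * b * c + a^3 * b * m 2 + a^3 * m 4 - a^2 * b^2 * c - a^2 * b * m 4 - a^2 * m 6 + a * b * m 6 else if i = 1 then a^4 * m 1 - 2 * a^3 * b * m 1 + a^2 * b * m 3 - a^2 * m 5 + 2 * a * m 7 - b * m 7 else if i = 2 then - (a^4) + 3 * a^3 * b - 3 * a^2 * b * c - a^2 * b * m 2 + a * b^2 * c + a * m 6 else if i = 3 then a^2 * b * m 1 - m 7 else if i = 4 then - (a^2 * b) + a * b * c else 0) else 0))"

definition pencil_den :: "complex \<Rightarrow> complex \<Rightarrow> complex \<Rightarrow> (nat \<Rightarrow> complex) \<Rightarrow> nat \<Rightarrow> nat \<Rightarrow> complex" where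
  "pencil_den a b c m i j = (if j = 0 then (if i = 0 then - (a^5) + a^4 * c + a^4 * m 2 - a^3 * b * c - a^3 * c * m 2 - a^3 * m 4 + a^2 * b * c^2 + a^2 * c * m 4 + a^2 * m 6 - a * c * m 6 else if i = 1 then - (a^4 * m 1) + 2 * a^3 * c * m 1 - a^2 * c * m 3 + a^2 * m 5 - 2 * a * m 7 + c * m 7 else if i = 2 then a^4 - 3 * a^3 * c + 3 * a^2 * b * c + a^2 * c * m 2 - a * b * c^2 - a * m 6 else if i = 3 then - (a^2 * c * m 1) + m 7 else if i = 4 then a^2 * c - a * b * c else 0)
    else (if j = 1 then (if i = 0 then - (a^4 * m 1) + a^3 * m 3 - a^2 * m 5 + a * m 7 else if i = 1 then 2 * a^4 - a^3 * m 2 - 2 * a^2 * b * c + a * m 6 else if i = 2 then a^3 * m 1 - m 7 else if i = 3 then - (a^3) + a * b * c else if i = 4 then 0 else 0) else 0))"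


lemma pencil_den_on_curve:
  assumes "s \<noteq> 0"
  shows "s^4 * bd41 (pencil_den a b c m) (s + a/s) (s + c/s) = a^2 * (c - a) * base_poly a b c m s"
  unfolding bd41_expand pencil_den_def base_poly_def using assms
  by (simp add: field_simps) algebra

lemma pencil_num_on_curve:
  assumes "s \<noteq> 0"
  shows "s^5 * bd41 (pencil_num a b c m) (s + a/s) (s + c/s)
       = a * (c - a) * (a^2 + b * s^2) * base_poly a b c m s"
  unfolding bd41_expand pencil_num_def base_poly_def using assms
  by (simp add: field_simps) algebra

lemma pencil_vanishes_at_base:
  assumes "s \<noteq> 0" "base_poly a b c m s = 0"
  shows "bd41 (pencil_den a b c m) (s + a/s) (s + c/s) = 0"
    and "bd41 (pencil_num a b c m) (s + a/s) (s + c/s) = 0"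
  using pencil_den_on_curve[of s a b c m] pencil_num_on_curve[of s a b c m] assms by simp_all

lemma pencil_value_on_curve:
  assumes s0: "s \<noteq> 0" and a0: "a \<noteq> 0" and ac: "a \<noteq> c" and U0: "base_poly a b c m s \<noteq> 0"
  shows "bd41 (pencil_den a b c m) (s + a/s) (s + c/s) \<noteq> 0 \<and>
         bd41 (pencil_num a b c m) (s + a/s) (s + c/s) / bd41 (pencil_den a b c m) (s + a/s) (s + c/s)
           = a/s + b*s/a"
proof -
  define Dv where "Dv = bd41 (pencil_den a b c m) (s + a/s) (s + c/s)"
  define Nv where "Nv = bd41 (pencil_num a b c m) (s + a/s) (s + c/s)"
  have hD: "s^4 * Dv = a^2 * (c - a) * base_poly a b c m s"
    using pencil_den_on_curve[OF s0] by (simp add: Dv_def)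
  have hN: "s^5 * Nv = a * (c - a) * (a^2 + b * s^2) * base_poly a b c m s"
    using pencil_num_on_curve[OF s0] by (simp add: Nv_def)
  have D0: "Dv \<noteq> 0" using hD a0 ac U0 by auto
  have "s^5 * ((a/s + b*s/a) * Dv) = s * (a/s + b*s/a) * (s^4 * Dv)"
    by (simp add: eval_nat_numeral mult_ac)
  also have "\<dots> = s^5 * Nv" unfolding hD hN using s0 a0 by (simp add: field_simps power2_eq_square)
  finally have "Nv = (a/s + b*s/a) * Dv" using s0 by simp
  then show ?thesis using D0 by (simp add: Nv_def[symmetric] Dv_def[symmetric])
qed

lemma curve_pencil_explicit:
  assumes a0: "a \<noteq> 0" and ac: "a \<noteq> c" and W0: "0 \<notin> W" and fW: "finite W"
    and roots: "\<And>z. base_poly a b c m z = 0 \<longleftrightarrow> z \<in> W"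
  shows "curve_pencil a b c W (pencil_num a b c m) (pencil_den a b c m)"
  unfolding curve_pencil_def
proof (intro conjI ballI)
  fix w assume "w \<in> W"
  then show "bd41 (pencil_num a b c m) (w + a/w) (w + c/w) = 0"
    "bd41 (pencil_den a b c m) (w + a/w) (w + c/w) = 0"
    using pencil_vanishes_at_base[of w a b c m] roots W0 by auto
next
  have "{s. \<not> (bd41 (pencil_den a b c m) (s + a/s) (s + c/s) \<noteq> 0 \<and>
            bd41 (pencil_num a b c m) (s + a/s) (s + c/s) / bd41 (pencil_den a b c m) (s + a/s) (s + c/s)
              = a/s + b*s/a)} \<subseteq> insert 0 W"
    using pencil_value_on_curve[OF _ a0 ac] roots by blast
  then show "finite {s. \<not> (bd41 (pencil_den a b c m) (s + a/s) (s + c/s) \<noteq> 0 \<and>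
            bd41 (pencil_num a b c m) (s + a/s) (s + c/s) / bd41 (pencil_den a b c m) (s + a/s) (s + c/s)
              = a/s + b*s/a)}"
    by (rule finite_subset) (use fW in simp)
qed

section \<open>Relation (B) defines the explicit map\<close>

text \<open>The polynomials P_n, P_d and relation (B) in terms of a = h1/q, b = h2 q, c = h2 and
  a coefficient sequence m.\<close>
definition Pn_of :: "(nat \<Rightarrow> complex) \<Rightarrow> complex \<Rightarrow> complex \<Rightarrow> complex" where
  "Pn_of m h x = m 0 * x^4 - m 1 * x^3 + (m 2 - 3*h*m 0 - m 8 / h^3) * x^2
     + (2*h*m 1 - m 3 + m 7 / h^2) * x
     + (h^2 * m 0 - h * m 2 + m 4 - m 6 / h + m 8 / h^2)"

definition Pd_of :: "(nat \<Rightarrow> complex) \<Rightarrow> complex \<Rightarrow> complex \<Rightarrow> complex" where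
  "Pd_of m h x = m 8 * x^4 - h * m 7 * x^3 + (h^2 * m 6 - 3*h*m 8 - h^5 * m 0) * x^2
     + (2*h^2 * m 7 - h^3 * m 5 + h^5 * m 1) * x
     + (h^6 * m 0 - h^5 * m 2 + h^4 * m 4 - h^3 * m 6 + h^2 * m 8)"

definition rel_red :: "complex \<Rightarrow> complex \<Rightarrow> complex \<Rightarrow> (nat \<Rightarrow> complex) \<Rightarrow>
    complex \<Rightarrow> complex \<Rightarrow> complex \<Rightarrow> bool" where
  "rel_red a b c m x y z \<longleftrightarrow>
     ((x - z) * (x - y) - (a - b) * (a - c) * (1/a)) /
     ((x/a - z/b) * (x/a - y/c) - (1/a - 1/b) * (1/a - 1/c) * a)
     = a^4 * b * c * (Pn_of m a x / Pd_of m a x)"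

text \<open>Exchanging b and c exchanges the roles of g and gb: this is why the inverse map is
  the forward construction with b and c swapped.\<close>
lemma rel_red_swap: "rel_red a b c m x y z = rel_red a c b m x z y"
  unfolding rel_red_def by (simp add: mult_ac)

lemma rel_red_cleared:
  assumes "a \<noteq> 0" "b \<noteq> 0" "c \<noteq> 0" "m 0 = 1" "m 8 = a^2*b*c"
  shows "Pd_of m a x * ((x - z) * (x - y) - (a - b) * (a - c) * (1/a))
     - a^4*b*c * Pn_of m a x * ((x/a - z/b) * (x/a - y/c) - (1/a - 1/b) * (1/a - 1/c) * a)
     = a * x * (z * bd41 (pencil_den a b c m) x y - bd41 (pencil_num a b c m) x y)"
  unfolding bd41_expand pencil_den_def pencil_num_def Pn_of_def Pd_of_def assms(4,5) using assms(1-3)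
  by (simp add: field_simps) algebra

text \<open>The denominator of the left side of (B) evaluated at z = N/D, times a^2 b c D.\<close>
definition rel_degen :: "complex \<Rightarrow> complex \<Rightarrow> complex \<Rightarrow> (nat \<Rightarrow> complex) \<Rightarrow>
    complex \<Rightarrow> complex \<Rightarrow> complex" where
  "rel_degen a b c m x y =
     (b * x * bd41 (pencil_den a b c m) x y - a * bd41 (pencil_num a b c m) x y) * (c * x - a * y)
      - a * (a - b) * (a - c) * bd41 (pencil_den a b c m) x y"

lemma rel_red_iff:
  assumes a0: "a \<noteq> 0" and b0: "b \<noteq> 0" and c0: "c \<noteq> 0" and m0: "m 0 = 1" and m8: "m 8 = a^2*b*c"
    and x0: "x \<noteq> 0" and Pd0: "Pd_of m a x \<noteq> 0" and Pn0: "Pn_of m a x \<noteq> 0"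
    and D0: "bd41 (pencil_den a b c m) x y \<noteq> 0" and F0: "rel_degen a b c m x y \<noteq> 0"
  shows "rel_red a b c m x y z \<longleftrightarrow> z = bd41 (pencil_num a b c m) x y / bd41 (pencil_den a b c m) x y"
proof -
  define N where "N = bd41 (pencil_num a b c m) x y"
  define D where "D = bd41 (pencil_den a b c m) x y"
  define Num where "Num = (\<lambda>z. (x - z) * (x - y) - (a - b) * (a - c) * (1/a))"
  define Den where "Den = (\<lambda>z. (x/a - z/b) * (x/a - y/c) - (1/a - 1/b) * (1/a - 1/c) * a)"
  define K where "K = a^4*b*c"
  have I: "Pd_of m a x * Num w - K * Pn_of m a x * Den w = a * x * (w * D - N)" for w
    using rel_red_cleared[OF a0 b0 c0 m0 m8, of x w y] unfolding Num_def Den_def K_def N_def D_def by simp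
  have rel: "rel_red a b c m x y z \<longleftrightarrow> Num z / Den z = K * (Pn_of m a x / Pd_of m a x)"
    unfolding rel_red_def Num_def Den_def K_def by simp
  have K0: "K \<noteq> 0" using a0 b0 c0 by (simp add: K_def)
  have D0': "D \<noteq> 0" using D0 by (simp add: D_def)
  have "Den (N/D) * (a^2*b*c*D) = rel_degen a b c m x y"
    unfolding Den_def rel_degen_def N_def[symmetric] D_def[symmetric] using a0 b0 c0 D0'
    by (simp add: field_simps) algebra
  then have DenS: "Den (N/D) \<noteq> 0" using F0 by auto
  show ?thesis
  proof
    assume r: "rel_red a b c m x y z"
    have "Den z \<noteq> 0"
    proof
      assume "Den z = 0"
      then have "K * (Pn_of m a x / Pd_of m a x) = 0" using r rel by simp
      then show False using K0 Pn0 Pd0 by simp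
    qed
    then have "Num z = K * (Pn_of m a x / Pd_of m a x) * Den z" using r rel by (simp add: divide_eq_eq)
    then have "Pd_of m a x * Num z - K * Pn_of m a x * Den z = 0" using Pd0 by (simp add: field_simps)
    then have "z * D = N" using I a0 x0 by simp
    then show "z = bd41 (pencil_num a b c m) x y / bd41 (pencil_den a b c m) x y"
      using D0' by (simp add: N_def D_def eq_divide_eq)
  next
    assume "z = bd41 (pencil_num a b c m) x y / bd41 (pencil_den a b c m) x y"
    then have z: "z = N / D" by (simp add: N_def D_def)
    have "Pd_of m a x * Num z - K * Pn_of m a x * Den z = 0" using I[of z] z D0' by simp
    then have "Num z = K * Pn_of m a x * Den z / Pd_of m a x" using Pd0 by (simp add: field_simps)
    then show "rel_red a b c m x y z" using rel DenS z Pd0 by simp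
  qed
qed

text \<open>Each of the excluded polynomials is nonzero on the line y = 0, so their product is a
  nonzero polynomial in (x, y).\<close>
lemma Pd_of_roots_finite:
  assumes "m 8 \<noteq> 0" shows "finite {x. Pd_of m h x = 0}"
proof -
  define p where "p = [:h^6 * m 0 - h^5 * m 2 + h^4 * m 4 - h^3 * m 6 + h^2 * m 8,
      2*h^2 * m 7 - h^3 * m 5 + h^5 * m 1, h^2 * m 6 - 3*h*m 8 - h^5 * m 0, - h * m 7, m 8:]"
  have "Pd_of m h x = poly p x" for x
    unfolding Pd_of_def p_def by (simp add: algebra_simps power_numeral_reduce)
  moreover have "p \<noteq> 0" using assms by (simp add: p_def)
  ultimately show ?thesis using poly_roots_finite[of p] by simp
qed

lemma Pn_of_roots_finite:
  assumes "m 0 \<noteq> 0" shows "finite {x. Pn_of m h x = 0}"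
proof -
  define p where "p = [:h^2 * m 0 - h * m 2 + m 4 - m 6 / h + m 8 / h^2, 2*h*m 1 - m 3 + m 7 / h^2,
      m 2 - 3*h*m 0 - m 8 / h^3, - m 1, m 0:]"
  have "Pn_of m h x = poly p x" for x
    unfolding Pn_of_def p_def by (simp add: algebra_simps power_numeral_reduce)
  moreover have "p \<noteq> 0" using assms by (simp add: p_def)
  ultimately show ?thesis using poly_roots_finite[of p] by simp
qed

lemma pencil_den_4_0: "pencil_den a b c m 4 0 = a * c * (a - b)"
  by (simp add: pencil_den_def algebra_simps power2_eq_square)

lemma bd41_line_roots_finite:
  assumes "A 4 0 \<noteq> 0" shows "finite {x. bd41 A x 0 = 0}"
proof -
  have "coeff (pc A 0) 4 \<noteq> 0" using assms by (simp add: coeff_pc)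
  then have "pc A 0 \<noteq> 0" by auto
  then have "finite {x. poly (pc A 0) x = 0}" by (rule poly_roots_finite)
  then show ?thesis by (simp add: bd41_pc)
qed

lemma rel_degen_line_roots_finite:
  assumes "b \<noteq> 0" "c \<noteq> 0" "pencil_den a b c m 4 0 \<noteq> 0"
  shows "finite {x. rel_degen a b c m x 0 = 0}"
proof -
  define p where "p = monom c 1 * (monom b 1 * pc (pencil_den a b c m) 0 - smult a (pc (pencil_num a b c m) 0))
      - smult (a * (a - b) * (a - c)) (pc (pencil_den a b c m) 0)"
  have "rel_degen a b c m x 0 = poly p x" for x
    unfolding rel_degen_def p_def bd41_pc by (simp add: poly_monom algebra_simps)
  moreover have "coeff p 6 = c * (b * pencil_den a b c m 4 0)"
    unfolding p_def by (simp add: coeff_monom_mult coeff_pc)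
  then have "p \<noteq> 0" using assms by auto
  ultimately show ?thesis using poly_roots_finite[of p] by simp
qed

lemma rel_red_graph:
  assumes a0: "a \<noteq> 0" and b0: "b \<noteq> 0" and c0: "c \<noteq> 0" and ab: "a \<noteq> b"
    and m0: "m 0 = 1" and m8: "m 8 = a^2*b*c"
  shows "\<exists>E. nonzero_mpoly 2 E \<and> (\<forall>x y. mpoly_val E (pt2 x y) \<noteq> 0 \<longrightarrow>
     (\<forall>z. rel_red a b c m x y z \<longleftrightarrow> z = bd41 (pencil_num a b c m) x y / bd41 (pencil_den a b c m) x y))"
proof -
  define fE where "fE = (\<lambda>v::nat\<Rightarrow>complex. v 0 * Pd_of m a (v 0) * Pn_of m a (v 0)
      * bd41 (pencil_den a b c m) (v 0) (v 1) * rel_degen a b c m (v 0) (v 1))"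
  have pf: "polyfun 2 fE" unfolding fE_def Pd_of_def Pn_of_def rel_degen_def bd41_def
    by (intro polyfun_mult polyfun_add polyfun_diff polyfun_power polyfun_sum polyfun_const
        polyfun_var finite_atMost) auto
  define Bad where "Bad = {0} \<union> {x. Pd_of m a x = 0} \<union> {x. Pn_of m a x = 0}
      \<union> {x. bd41 (pencil_den a b c m) x 0 = 0} \<union> {x. rel_degen a b c m x 0 = 0}"
  have "pencil_den a b c m 4 0 \<noteq> 0" using a0 c0 ab by (simp add: pencil_den_4_0)
  then have "finite Bad" unfolding Bad_def
    using Pd_of_roots_finite[of m a] Pn_of_roots_finite[of m a] bd41_line_roots_finite
      rel_degen_line_roots_finite[OF b0 c0] m8 m0 a0 b0 c0 by simp
  then obtain x0 where "x0 \<notin> Bad" using ex_new_if_finite[OF infinite_UNIV_char_0] by blast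
  then have "fE (pt2 x0 0) \<noteq> 0" by (simp add: fE_def pt2_def Bad_def)
  then obtain E where E: "nonzero_mpoly 2 E" "\<forall>v. mpoly_val E v = fE v"
    using polyfun_nonzero[OF pf] by blast
  have "rel_red a b c m x y z \<longleftrightarrow> z = bd41 (pencil_num a b c m) x y / bd41 (pencil_den a b c m) x y"
    if "mpoly_val E (pt2 x y) \<noteq> 0" for x y z
    using that E(2) rel_red_iff[OF a0 b0 c0 m0 m8] by (simp add: fE_def pt2_def)
  then show ?thesis using E(1) by blast
qed

section \<open>Reduction of the parameters\<close>

lemma msym_0: "msym u 0 = 1"
proof -
  have "{S. S \<subseteq> {1..8::nat} \<and> card S = 0} = {{}}"
    by (auto dest: finite_subset[OF _ finite_atLeastAtMost])
  then show ?thesis unfolding msym_def by simp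
qed

lemma msym_8: "msym u 8 = (\<Prod>i\<in>{1..8::nat}. u i)"
proof -
  have "{S. S \<subseteq> {1..8::nat} \<and> card S = 8} = {{1..8}}"
  proof
    show "{S. S \<subseteq> {1..8::nat} \<and> card S = 8} \<subseteq> {{1..8}}"
    proof
      fix S assume "S \<in> {S. S \<subseteq> {1..8::nat} \<and> card S = 8}"
      then have "S \<subseteq> {1..8}" "card S = card {1..8::nat}" by auto
      then have "S = {1..8}" using card_subset_eq by blast
      then show "S \<in> {{1..8}}" by simp
    qed
  qed auto
  then show ?thesis unfolding msym_def by simp
qed

lemma vieta8: "(\<Prod>i\<in>{1..8::nat}. z - u i) = (\<Sum>k\<le>8. (-1)^k * msym u k * z^(8-k))"
proof -
  let ?A = "{1..8::nat}"
  have "(\<Prod>i\<in>?A. z - u i) = (\<Sum>X\<in>Pow ?A. (-1) ^ card X * (\<Prod>i\<in>X. u i) * (\<Prod>i\<in>?A-X. z))"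
    by (rule prod_diff_conv_sum) simp
  also have "\<dots> = (\<Sum>X\<in>Pow ?A. (-1) ^ card X * (\<Prod>i\<in>X. u i) * z^(8 - card X))"
  proof (rule sum.cong)
    fix X assume "X \<in> Pow ?A"
    then have "card (?A - X) = 8 - card X" by (simp add: card_Diff_subset finite_subset)
    then show "(-1) ^ card X * (\<Prod>i\<in>X. u i) * (\<Prod>i\<in>?A-X. z) = (-1) ^ card X * (\<Prod>i\<in>X. u i) * z^(8 - card X)"
      by simp
  qed simp
  also have "\<dots> = (\<Sum>k\<le>8. \<Sum>X\<in>{X\<in>Pow ?A. card X = k}. (-1) ^ card X * (\<Prod>i\<in>X. u i) * z^(8 - card X))"
  proof (rule sum.group[symmetric])
    show "card ` Pow ?A \<subseteq> {..8}"
    proof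
      fix k assume "k \<in> card ` Pow ?A"
      then obtain X where "X \<subseteq> ?A" "k = card X" by auto
      then have "k \<le> card ?A" using card_mono[of ?A X] by simp
      then show "k \<in> {..8}" by simp
    qed
  qed auto
  also have "\<dots> = (\<Sum>k\<le>8. (-1)^k * msym u k * z^(8-k))"
  proof (rule sum.cong)
    fix k assume "k \<in> {..8::nat}"
    have "(\<Sum>X\<in>{X\<in>Pow ?A. card X = k}. (-1) ^ card X * (\<Prod>i\<in>X. u i) * z^(8 - card X))
        = (\<Sum>X\<in>{X\<in>Pow ?A. card X = k}. (-1) ^ k * z^(8 - k) * (\<Prod>i\<in>X. u i))"
      by (rule sum.cong) auto
    also have "\<dots> = (-1)^k * z^(8-k) * msym u k"
      unfolding msym_def sum_distrib_left[symmetric] by (simp add: Pow_def)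
    finally show "(\<Sum>X\<in>{X\<in>Pow ?A. card X = k}. (-1) ^ card X * (\<Prod>i\<in>X. u i) * z^(8 - card X))
        = (-1)^k * msym u k * z^(8-k)" by (simp add: mult_ac)
  qed simp
  finally show ?thesis .
qed

lemma base_poly_prod:
  assumes "m = msym u" "m 8 = a^2*b*c"
  shows "base_poly a b c m z = (\<Prod>i\<in>{1..8::nat}. z - u i)"
proof -
  have "(\<Sum>k\<le>8. (-1)^k * msym u k * z^(8-k)) = base_poly a b c m z"
    using assms msym_0[of u]
    by (simp add: base_poly_def numeral_eq_Suc atMost_Suc)
  then show ?thesis using vieta8 by simp
qed


text \<open>The data in reduced form: parameters a, b, c, coefficients m with constant term a^2 b c,
  and a set W of 8 distinct roots of the base polynomial, no two with product a (so that
  distinct base points have distinct x = w + a/w).\<close>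
definition base_data :: "complex \<Rightarrow> complex \<Rightarrow> complex \<Rightarrow> (nat \<Rightarrow> complex) \<Rightarrow> complex set \<Rightarrow> bool" where
  "base_data a b c m W \<longleftrightarrow> a \<noteq> 0 \<and> b \<noteq> 0 \<and> c \<noteq> 0 \<and> a \<noteq> b \<and> a \<noteq> c \<and>
     m 0 = 1 \<and> m 8 = a^2*b*c \<and> card W = 8 \<and>
     (\<forall>z. base_poly a b c m z = 0 \<longleftrightarrow> z \<in> W) \<and> (\<forall>w\<in>W. \<forall>w'\<in>W. w * w' \<noteq> a)"

lemma base_data_swap: "base_data a b c m W \<Longrightarrow> base_data a c b m W"
  unfolding base_data_def base_poly_swap[of a b c] by (auto simp: mult_ac)

text \<open>Existence, genericity of (B) and uniqueness, for the forward map in reduced form; the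
  inverse map is obtained by applying this to  base_data a c b m W.\<close>
lemma birational_pencil:
  assumes "base_data a b c m W"
  shows "(\<exists>E. nonzero_mpoly 2 E \<and> (\<forall>x y. mpoly_val E (pt2 x y) \<noteq> 0 \<longrightarrow>
           (\<forall>z. rel_red a b c m x y z \<longleftrightarrow>
                z = bd41 (pencil_num a b c m) x y / bd41 (pencil_den a b c m) x y))) \<and>
         curve_pencil a b c W (pencil_num a b c m) (pencil_den a b c m) \<and>
         (\<forall>N' D'. curve_pencil a b c W N' D' \<longrightarrow> (\<forall>x y.
           bd41 N' x y * bd41 (pencil_den a b c m) x y = bd41 (pencil_num a b c m) x y * bd41 D' x y))"
proof -
  have a0: "a \<noteq> 0" and b0: "b \<noteq> 0" and c0: "c \<noteq> 0" and ab: "a \<noteq> b" and ac: "a \<noteq> c"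
    and m0: "m 0 = 1" and m8: "m 8 = a^2*b*c" and cW: "card W = 8"
    and roots: "\<And>z. base_poly a b c m z = 0 \<longleftrightarrow> z \<in> W" and Wa: "\<forall>w\<in>W. \<forall>w'\<in>W. w * w' \<noteq> a"
    using assms unfolding base_data_def by auto
  have "base_poly a b c m 0 \<noteq> 0" using a0 b0 c0 by (simp add: base_poly_def)
  then have W0: "0 \<notin> W" using roots by blast
  have fW: "finite W" using cW by (simp add: card_ge_0_finite)
  note explicit = curve_pencil_explicit[OF a0 ac W0 fW roots]
  have "bd41 N' x y * bd41 (pencil_den a b c m) x y = bd41 (pencil_num a b c m) x y * bd41 D' x y"
    if "curve_pencil a b c W N' D'" for N' D' x y
    by (rule curve_pencil_unique[OF a0 c0 ac W0 _ Wa explicit that]) (simp add: cW)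
  then show ?thesis using rel_red_graph[OF a0 b0 c0 ab m0 m8] explicit by blast
qed

definition generic_params :: "complex \<Rightarrow> complex \<Rightarrow> (nat \<Rightarrow> complex) \<Rightarrow> bool" where
  "generic_params h1 h2 u \<longleftrightarrow> h1 \<noteq> 0 \<and> h2 \<noteq> 0 \<and> (\<Prod>i\<in>{1..8::nat}. u i) \<noteq> 0 \<and>
     (\<Prod>i\<in>{1..8::nat}. u i) \<noteq> h1 * h2^3 \<and> (\<Prod>i\<in>{1..8::nat}. u i)^2 \<noteq> h1^3 * h2^5 \<and>
     (\<forall>i\<in>{1..8::nat}. \<forall>j\<in>{1..8::nat}. u i * u j * h1 * h2^2 \<noteq> (\<Prod>i\<in>{1..8::nat}. u i)) \<and>
     (\<forall>i\<in>{1..8::nat}. \<forall>j\<in>{1..8::nat}. i \<noteq> j \<longrightarrow> u i \<noteq> u j)"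

lemma base_data_of_params:
  assumes gp: "generic_params h1 h2 u" and q: "q = qpar h1 h2 u"
  shows "q \<noteq> 0" and "base_data (h1/q) (h2*q) h2 (msym u) (u ` {1..8})"
proof -
  define P where "P = (\<Prod>i\<in>{1..8::nat}. u i)"
  have h10: "h1 \<noteq> 0" and h20: "h2 \<noteq> 0" and P0: "P \<noteq> 0" and Pac: "P \<noteq> h1 * h2^3"
    and Pab: "P^2 \<noteq> h1^3 * h2^5" and Puu: "\<forall>i\<in>{1..8::nat}. \<forall>j\<in>{1..8::nat}. u i * u j * h1 * h2^2 \<noteq> P"
    and uinj: "\<forall>i\<in>{1..8::nat}. \<forall>j\<in>{1..8::nat}. i \<noteq> j \<longrightarrow> u i \<noteq> u j"
    using gp unfolding generic_params_def P_def by auto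
  have qP: "q = h1^2 * h2^2 / P" unfolding q qpar_def P_def by simp
  show q0: "q \<noteq> 0" using h10 h20 P0 qP by simp
  have aP: "h1/q = P / (h1 * h2^2)" unfolding qP using h10 h20 P0 by (simp add: field_simps power2_eq_square)
  have bP: "h2*q = h1^2 * h2^3 / P"
    unfolding qP using h10 h20 P0 by (simp add: field_simps power2_eq_square power3_eq_cube)
  have ac: "h1/q \<noteq> h2"
    using Pac h10 h20 unfolding aP by (simp add: field_simps power2_eq_square power3_eq_cube)
  have ab: "h1/q \<noteq> h2*q"
  proof
    assume "h1/q = h2*q"
    then have "P^2 = h1^3 * h2^5" using h10 h20 P0 unfolding aP bP
      by (simp add: field_simps) (simp add: algebra_simps eval_nat_numeral)
    then show False using Pab by simp
  qed
  have P_abc: "P = (h1/q)^2 * (h2*q) * h2" unfolding aP bP using h10 h20 P0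
    by (simp add: field_simps) (simp add: algebra_simps eval_nat_numeral)
  have uua: "u i * u j \<noteq> h1/q" if "i \<in> {1..8::nat}" "j \<in> {1..8::nat}" for i j
    using Puu that h10 h20 unfolding aP by (auto simp: field_simps)
  have "inj_on u {1..8::nat}" using uinj by (meson inj_onI)
  then have "card (u ` {1..8::nat}) = 8" by (simp add: card_image)
  moreover have "base_poly (h1/q) (h2*q) h2 (msym u) z = 0 \<longleftrightarrow> z \<in> u ` {1..8}" for z
    using base_poly_prod[of "msym u" u "h1/q" "h2*q" h2] msym_8[of u] P_abc unfolding P_def
    by auto
  ultimately show "base_data (h1/q) (h2*q) h2 (msym u) (u ` {1..8})"
    unfolding base_data_def using h10 h20 q0 P0 ab ac uua msym_0[of u] msym_8[of u] P_abc
    by (auto simp: P_def)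
qed

lemma relB_reduced:
  assumes "q = qpar h1 h2 u" "q \<noteq> 0"
  shows "relB h1 h2 u x y z = rel_red (h1/q) (h2*q) h2 (msym u) x y z"
proof -
  have K: "h1^4 * h2^2 / q^3 = (h1/q)^4 * (h2*q) * h2" using assms(2) by (simp add: field_simps eval_nat_numeral)
  show ?thesis unfolding relB_def rel_red_def Let_def assms(1)[symmetric] K
    by (simp add: Pn_def Pd_def Pn_of_def Pd_of_def Let_def)
qed

lemma finite_involution_vimage:
  assumes "(a::complex) \<noteq> 0" shows "finite {t. a/t \<in> B} \<longleftrightarrow> finite B"
proof -
  have inv: "a/(a/t) = t" for t using assms by (cases "t = 0") auto
  have "{t. a/t \<in> B} = (\<lambda>t. a/t) ` B"
    by (intro equalityI subsetI) (metis imageI inv mem_Collect_eq, metis imageE inv mem_Collect_eq)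
  moreover have "inj (\<lambda>t. a/t)" by (metis injI inv)
  ultimately show ?thesis by (simp add: finite_image_iff inj_on_subset)
qed

text \<open>Properties (i), (ii) of the statement are the curve pencil conditions: for the forward map
  with the parameter s = a/t, for the inverse map with b and c exchanged.\<close>
lemma fwd_props_reduced:
  assumes q: "q = qpar h1 h2 u" and a0: "h1/q \<noteq> 0"
  shows "fwd_props h1 h2 u N D \<longleftrightarrow> curve_pencil (h1/q) (h2*q) h2 (u ` {1..8}) N D"
proof -
  define a where "a = h1/q"
  have fb: "fbar h1 q w = w + a/w" for w unfolding fbar_def a_def by simp
  have sub: "h1/(q*t) = a/t" for t unfolding a_def by simp
  have gb: "gbar h2 q t = a/(a/t) + h2*q*(a/t)/a" for t
    using a0 unfolding gbar_def a_def by (cases "t = 0") (auto simp: field_simps)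
  define Exc where "Exc = {s. \<not> (bd41 D (s + a/s) (s + h2/s) \<noteq> 0 \<and>
      bd41 N (s + a/s) (s + h2/s) / bd41 D (s + a/s) (s + h2/s) = a/s + h2*q*s/a)}"
  have "{t. \<not> (bd41 D (fbar h1 q (h1/(q*t))) (gfun h2 (h1/(q*t))) \<noteq> 0 \<and>
      bd41 N (fbar h1 q (h1/(q*t))) (gfun h2 (h1/(q*t))) /
      bd41 D (fbar h1 q (h1/(q*t))) (gfun h2 (h1/(q*t))) = gbar h2 q t)} = {t. a/t \<in> Exc}"
    unfolding Exc_def sub fb gb gfun_def by (simp only: mem_Collect_eq)
  moreover have "finite {t. a/t \<in> Exc} \<longleftrightarrow> finite Exc"
    by (rule finite_involution_vimage) (use a0 in \<open>simp add: a_def\<close>)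
  ultimately show ?thesis
    unfolding fwd_props_def curve_pencil_def Let_def q[symmetric] a_def[symmetric]
    by (simp add: fb gfun_def Exc_def)
qed

lemma inv_props_reduced:
  assumes q: "q = qpar h1 h2 u"
  shows "inv_props h1 h2 u N D \<longleftrightarrow> curve_pencil (h1/q) h2 (h2*q) (u ` {1..8}) N D"
  unfolding inv_props_def curve_pencil_def Let_def q[symmetric] fbar_def gfun_def gbar_def
  by (simp add: mult_ac)

section \<open>The genericity polynomial\<close>

definition u_prod :: "(nat \<Rightarrow> complex) \<Rightarrow> complex" where
  "u_prod v = (\<Prod>k\<in>{1..8::nat}. v (k+1))"

definition genericity_fun :: "(nat \<Rightarrow> complex) \<Rightarrow> complex" where
  "genericity_fun v = v 0 * v 1 * u_prod v * (u_prod v - v 0 * v 1^3) * ((u_prod v)^2 - v 0^3 * v 1^5)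
     * (\<Prod>i\<in>{1..8::nat}. \<Prod>j\<in>{1..8::nat}. (v (i+1) * v (j+1) * v 0 * v 1^2 - u_prod v))
     * (\<Prod>i\<in>{1..8::nat}. \<Prod>j\<in>{1..8::nat}-{i}. (v (i+1) - v (j+1)))"

lemma polyfun_u_prod: "polyfun 10 u_prod"
  unfolding u_prod_def by (rule polyfun_prod) (auto intro: polyfun_var)

lemma polyfun_genericity: "polyfun 10 genericity_fun"
proof -
  have v: "polyfun 10 (\<lambda>v. v i)" if "i < 10" for i using that by (rule polyfun_var)
  have v0: "polyfun 10 (\<lambda>v. v 0)" and v1: "polyfun 10 (\<lambda>v. v 1)" using v by auto
  have vi: "polyfun 10 (\<lambda>v. v (i+1))" if "i \<in> {1..8::nat}" for i using that v by auto
  show ?thesis unfolding genericity_fun_def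
    by (intro polyfun_mult polyfun_diff polyfun_power polyfun_prod finite_atLeastAtMost finite_Diff
        v0 v1 vi polyfun_u_prod) auto
qed

text \<open>The point h1 = h2 = 1, u_i = i, where the genericity polynomial does not vanish.\<close>
definition witness :: "nat \<Rightarrow> complex" where "witness i = (if i \<le> 1 then 1 else of_nat (i - 1))"

lemma u_prod_witness: "u_prod witness = 40320"
proof -
  have "u_prod witness = (\<Prod>k\<in>{1..8::nat}. of_nat k)"
    unfolding u_prod_def witness_def by (rule prod.cong) auto
  also have "\<dots> = of_nat (\<Prod>k\<in>{1..8::nat}. k)" by simp
  also have "(\<Prod>k\<in>{1..8::nat}. k) = 40320"
  proof -
    have "{1..8::nat} = {1,2,3,4,5,6,7,8}" by auto
    then show ?thesis by simp
  qed
  finally show ?thesis by simp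
qed

lemma genericity_fun_witness: "genericity_fun witness \<noteq> 0"
proof -
  have x01: "witness 0 = 1" "witness 1 = 1" by (auto simp: witness_def)
  have xi: "witness (i+1) = of_nat i" if "i \<in> {1..8::nat}" for i using that by (auto simp: witness_def)
  have pair_factor: "witness (i+1) * witness (j+1) * witness 0 * witness 1^2 - u_prod witness \<noteq> 0" if "i \<in> {1..8::nat}" "j \<in> {1..8::nat}" for i j
  proof -
    have "i * j \<le> 8 * 8" using that by (intro mult_mono) auto
    then have "i * j \<noteq> 40320" by simp
    then have "(of_nat (i*j) :: complex) \<noteq> of_nat 40320" by (metis of_nat_eq_iff)
    then have "(of_nat i * of_nat j :: complex) \<noteq> 40320" by simp
    then show ?thesis by (simp only: xi[OF that(1)] xi[OF that(2)] x01 u_prod_witness) simp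
  qed
  have diff_factor: "witness (i+1) - witness (j+1) \<noteq> 0" if "i \<in> {1..8::nat}" "j \<in> {1..8::nat}-{i}" for i j
    using that by (simp add: witness_def)
  have pair_prod: "(\<Prod>i\<in>{1..8::nat}. \<Prod>j\<in>{1..8::nat}. (witness (i+1) * witness (j+1) * witness 0 * witness 1^2 - u_prod witness)) \<noteq> 0"
    using pair_factor by simp
  have diff_prod: "(\<Prod>i\<in>{1..8::nat}. \<Prod>j\<in>{1..8::nat}-{i}. (witness (i+1) - witness (j+1))) \<noteq> 0"
    using diff_factor by simp
  have scalar_factors: "witness 0 * witness 1 * u_prod witness * (u_prod witness - witness 0 * witness 1^3) * ((u_prod witness)^2 - witness 0^3 * witness 1^5) \<noteq> 0"
    unfolding u_prod_witness by (simp add: witness_def)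
  show ?thesis unfolding genericity_fun_def using pair_prod diff_prod scalar_factors by (simp only: mult_eq_0_iff de_Morgan_disj) simp
qed

lemma generic_params_of_nonzero:
  assumes "genericity_fun (param_vec h1 h2 u) \<noteq> 0"
  shows "generic_params h1 h2 u"
proof -
  define v where "v = param_vec h1 h2 u"
  define P where "P = (\<Prod>i\<in>{1..8::nat}. u i)"
  have v0: "v 0 = h1" and v1: "v 1 = h2" and vi: "\<And>i. 1 \<le> i \<Longrightarrow> v (Suc i) = u i"
    unfolding v_def by (auto simp: param_vec_def)
  have vP: "u_prod v = P" unfolding u_prod_def P_def by (rule prod.cong) (simp_all add: vi)
  have "h1 \<noteq> 0" "h2 \<noteq> 0" "P \<noteq> 0" "P \<noteq> h1 * h2^3" "P^2 \<noteq> h1^3 * h2^5"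
    and pairs: "\<forall>i\<in>{1..8::nat}. \<forall>j\<in>{1..8::nat}. v (i+1) * v (j+1) * h1 * h2^2 \<noteq> P"
    and distinct: "\<forall>i\<in>{1..8::nat}. \<forall>j\<in>{1..8::nat}-{i}. v (i+1) \<noteq> v (j+1)"
    using assms unfolding v_def[symmetric] genericity_fun_def v0 v1 vP by auto
  moreover have "\<forall>i\<in>{1..8::nat}. \<forall>j\<in>{1..8::nat}. u i * u j * h1 * h2^2 \<noteq> P"
    using pairs by (auto simp: vi)
  moreover have "\<forall>i\<in>{1..8::nat}. \<forall>j\<in>{1..8::nat}. i \<noteq> j \<longrightarrow> u i \<noteq> u j"
    using distinct by (auto simp: vi)
  ultimately show ?thesis unfolding generic_params_def P_def by blast
qed

lemma lemma3_at_generic_params: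
  assumes "generic_params h1 h2 u"
  shows "\<exists>N D N2 D2.
         (\<exists>E. nonzero_mpoly 2 E \<and> (\<forall>x y. mpoly_val E (pt2 x y) \<noteq> 0 \<longrightarrow>
            (\<forall>z. relB h1 h2 u x y z \<longleftrightarrow> z = bd41 N x y / bd41 D x y))) \<and>
         (\<exists>E. nonzero_mpoly 2 E \<and> (\<forall>x z. mpoly_val E (pt2 x z) \<noteq> 0 \<longrightarrow>
            (\<forall>y. relB h1 h2 u x y z \<longleftrightarrow> y = bd41 N2 x z / bd41 D2 x z))) \<and>
         fwd_props h1 h2 u N D \<and> inv_props h1 h2 u N2 D2 \<and>
         (\<forall>N' D'. fwd_props h1 h2 u N' D' \<longrightarrow>
            (\<forall>x y. bd41 N' x y * bd41 D x y = bd41 N x y * bd41 D' x y)) \<and>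
         (\<forall>N' D'. inv_props h1 h2 u N' D' \<longrightarrow>
            (\<forall>x y. bd41 N' x y * bd41 D2 x y = bd41 N2 x y * bd41 D' x y))"
proof -
  define q where "q = qpar h1 h2 u"
  define a b c m W where "a = h1/q" and "b = h2*q" and "c = h2" and "m = msym u" and "W = u ` {1..8::nat}"
  have q0: "q \<noteq> 0" and BD: "base_data a b c m W"
    using base_data_of_params[OF assms q_def] unfolding a_def b_def c_def m_def W_def by auto
  have rel: "relB h1 h2 u x y z \<longleftrightarrow> rel_red a b c m x y z" for x y z
    using relB_reduced[OF q_def q0] unfolding a_def b_def c_def m_def by simp
  have fwd: "fwd_props h1 h2 u N D \<longleftrightarrow> curve_pencil a b c W N D" for N D
    using fwd_props_reduced[OF q_def] BD unfolding a_def b_def c_def W_def base_data_def by simp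
  have inv: "inv_props h1 h2 u N D \<longleftrightarrow> curve_pencil a c b W N D" for N D
    using inv_props_reduced[OF q_def] unfolding a_def b_def c_def W_def by simp
  obtain E1 where E1: "nonzero_mpoly 2 E1" "\<forall>x y. mpoly_val E1 (pt2 x y) \<noteq> 0 \<longrightarrow>
      (\<forall>z. rel_red a b c m x y z \<longleftrightarrow> z = bd41 (pencil_num a b c m) x y / bd41 (pencil_den a b c m) x y)"
    and F: "curve_pencil a b c W (pencil_num a b c m) (pencil_den a b c m)"
      "\<forall>N' D'. curve_pencil a b c W N' D' \<longrightarrow> (\<forall>x y.
        bd41 N' x y * bd41 (pencil_den a b c m) x y = bd41 (pencil_num a b c m) x y * bd41 D' x y)"
    using birational_pencil[OF BD] by blast
  obtain E2 where E2: "nonzero_mpoly 2 E2" "\<forall>x z. mpoly_val E2 (pt2 x z) \<noteq> 0 \<longrightarrow>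
      (\<forall>y. rel_red a c b m x z y \<longleftrightarrow> y = bd41 (pencil_num a c b m) x z / bd41 (pencil_den a c b m) x z)"
    and I: "curve_pencil a c b W (pencil_num a c b m) (pencil_den a c b m)"
      "\<forall>N' D'. curve_pencil a c b W N' D' \<longrightarrow> (\<forall>x y.
        bd41 N' x y * bd41 (pencil_den a c b m) x y = bd41 (pencil_num a c b m) x y * bd41 D' x y)"
    using birational_pencil[OF base_data_swap[OF BD]] by blast
  have fwd_graph: "\<forall>x y. mpoly_val E1 (pt2 x y) \<noteq> 0 \<longrightarrow> (\<forall>z. relB h1 h2 u x y z \<longleftrightarrow>
      z = bd41 (pencil_num a b c m) x y / bd41 (pencil_den a b c m) x y)"
    using E1(2) by (simp only: rel)
  have inv_graph: "\<forall>x z. mpoly_val E2 (pt2 x z) \<noteq> 0 \<longrightarrow> (\<forall>y. relB h1 h2 u x y z \<longleftrightarrow>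
      y = bd41 (pencil_num a c b m) x z / bd41 (pencil_den a c b m) x z)"
    using E2(2) by (simp only: rel rel_red_swap[of a b c m])
  show ?thesis
    using E1(1) E2(1) fwd_graph inv_graph F I unfolding fwd inv
    by (intro exI[of _ "pencil_num a b c m"] exI[of _ "pencil_den a b c m"]
        exI[of _ "pencil_num a c b m"] exI[of _ "pencil_den a c b m"]) blast
qed

theorem lemma3:
  shows "\<exists>Q. nonzero_mpoly 10 Q \<and>
    (\<forall>h1 h2 u. mpoly_val Q (param_vec h1 h2 u) \<noteq> 0 \<longrightarrow>
      (\<exists>N D N2 D2.
         \<comment> \<open>(B) defines gb = N/D as a function of (fb, g), generically\<close>
         (\<exists>E. nonzero_mpoly 2 E \<and> (\<forall>x y. mpoly_val E (pt2 x y) \<noteq> 0 \<longrightarrow>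
            (\<forall>z. relB h1 h2 u x y z \<longleftrightarrow> z = bd41 N x y / bd41 D x y))) \<and>
         \<comment> \<open>and its inverse g = N2/D2 as a function of (fb, gb), generically\<close>
         (\<exists>E. nonzero_mpoly 2 E \<and> (\<forall>x z. mpoly_val E (pt2 x z) \<noteq> 0 \<longrightarrow>
            (\<forall>y. relB h1 h2 u x y z \<longleftrightarrow> y = bd41 N2 x z / bd41 D2 x z))) \<and>
         \<comment> \<open>both satisfy (i) and (ii)\<close>
         fwd_props h1 h2 u N D \<and> inv_props h1 h2 u N2 D2 \<and>
         \<comment> \<open>and are uniquely characterized by (i) and (ii)\<close>
         (\<forall>N' D'. fwd_props h1 h2 u N' D' \<longrightarrow>
            (\<forall>x y. bd41 N' x y * bd41 D x y = bd41 N x y * bd41 D' x y)) \<and>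
         (\<forall>N' D'. inv_props h1 h2 u N' D' \<longrightarrow>
            (\<forall>x y. bd41 N' x y * bd41 D2 x y = bd41 N2 x y * bd41 D' x y))))"
proof -
  obtain Q where Q: "nonzero_mpoly 10 Q" "\<forall>v. mpoly_val Q v = genericity_fun v"
    using polyfun_nonzero[OF polyfun_genericity genericity_fun_witness] by blast
  show ?thesis
    using Q(1) by (intro exI[of _ Q] conjI allI impI lemma3_at_generic_params generic_params_of_nonzero)
      (simp_all add: Q(2))
qed

end
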